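(* Let $(s_i)$ be in the dominant chamber. Under the bijection $(s_i)\mapsto(\gamma_1,\ldots,\gamma_{n-1})$ described in the context, the length of $(s_i)$ is $\sum_{i=1}^{n-1} (n-i)\gamma_i$.
   Context: Let $W$ be the affine Weyl group of type $\widetilde{A}_{n-1}$, with vertex set $I$ of its extended Dynkin graph (a cycle on $n$ vertices, indexed by $\mathbb{Z}/n$), acting on configuration space $\mathbb{R}^I$ by the simple reflections $s_i$ (in the basis of fundamental coweights: $s_i$ negates coordinate $i$ and adds $v_i$ to the two adjacent coordinates). For $w\in W$, $l(w)$ denotes the length, i.e. the minimal number of simple reflections whose product is $w$. Let $\tilde{S}_n$ be the set of permutations $i \mapsto s_i$ of the integers such that $s_{i+n} = s_i + n$ and $\sum_{i=1}^n s_i = \sum_{i=1}^n i$. The map $\partial : \tilde{S}_n \to \mathbb{R}^I$, $(\partial s)_i = s_i - s_{i-1}$, is injective with image $W \cdot (1,1,\ldots,1)$; since $W$ acts freely on $(1,\ldots,1)$, this identifies $\tilde{S}_n$ with $W$ (an element $s$ corresponds to the $w\in W$ with $\partial s = w\cdot(1,\ldots,1)$), and the length of $s$ means $l(w)$. Under this identification the dominant chamber consists of those $s$ with $s_1 < s_2 < \cdots < s_n$. Given $(s_i)$ in the dominant chamber, define $(\gamma_1, \ldots, \gamma_{n-1})$ as follows: for $1 \le i \le n-1$, let $U_i$ be the set of integers $t$ with $t < s_{i+1}$ and $t \not\equiv s_{i+1}, s_{i+2}, \ldots, s_n \pmod n$; number its elements $u_0 > u_1 > u_2 > \cdots$; then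 $s_i \in U_i$, and $\gamma_i$ is defined by $s_i = u_{\gamma_i}$. This gives a bijection between the dominant chamber and $\mathbb{Z}_{\geq 0}^{n-1}$. *)

theory Defs
  imports Complex_Main
begin

text \<open>Configuration space \<open>\<real>^I\<close>, I = Z/n, represented by functions \<open>nat \<Rightarrow> real\<close>,
  where coordinate \<open>j\<close> (for \<open>j < n\<close>) is the vertex \<open>j mod n\<close>; coordinates \<open>\<ge> n\<close> are unused
  (kept fixed by the reflections).\<close>

definition simple_refl :: "nat \<Rightarrow> nat \<Rightarrow> (nat \<Rightarrow> real) \<Rightarrow> (nat \<Rightarrow> real)" where
  "simple_refl n i x = (\<lambda>j. if j = i then - x i
      else x j + (if j = (i + 1) mod n then x i else 0)
               + (if j = (i + n - 1) mod n then x i else 0))"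

definition word_act :: "nat \<Rightarrow> nat list \<Rightarrow> (nat \<Rightarrow> real) \<Rightarrow> (nat \<Rightarrow> real)" where
  "word_act n ws x = foldr (simple_refl n) ws x"

definition ones_vec :: "nat \<Rightarrow> (nat \<Rightarrow> real)" where
  "ones_vec n = (\<lambda>j. if j < n then 1 else 0)"

definition affine_perm :: "nat \<Rightarrow> (int \<Rightarrow> int) \<Rightarrow> bool" where
  "affine_perm n s \<longleftrightarrow> bij s \<and> (\<forall>i. s (i + int n) = s i + int n)
     \<and> (\<Sum>i=1..int n. s i) = (\<Sum>i=1..int n. i)"

definition boundary :: "nat \<Rightarrow> (int \<Rightarrow> int) \<Rightarrow> (nat \<Rightarrow> real)" where
  "boundary n s = (\<lambda>j. if j < n then real_of_int (s (int j) - s (int j - 1)) else 0)"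

definition aff_length :: "nat \<Rightarrow> (int \<Rightarrow> int) \<Rightarrow> nat" where
  "aff_length n s = (LEAST k. \<exists>ws. length ws = k \<and> set ws \<subseteq> {..<n}
        \<and> word_act n ws (ones_vec n) = boundary n s)"

definition dominant :: "nat \<Rightarrow> (int \<Rightarrow> int) \<Rightarrow> bool" where
  "dominant n s \<longleftrightarrow> (\<forall>i j. 1 \<le> i \<longrightarrow> i < j \<longrightarrow> j \<le> int n \<longrightarrow> s i < s j)"

definition U_set :: "nat \<Rightarrow> (int \<Rightarrow> int) \<Rightarrow> int \<Rightarrow> int set" where
  "U_set n s i = {t. t < s (i + 1) \<and> (\<forall>k. i + 1 \<le> k \<and> k \<le> int n \<longrightarrow> t mod int n \<noteq> s k mod int n)}"

text \<open>\<open>\<gamma>_i\<close>: the index of \<open>s_i\<close> in the decreasing enumeration \<open>u_0 > u_1 > \<dots>\<close> of \<open>U_i\<close>,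
  i.e. the number of elements of \<open>U_i\<close> exceeding \<open>s_i\<close>.\<close>
definition gamma :: "nat \<Rightarrow> (int \<Rightarrow> int) \<Rightarrow> int \<Rightarrow> nat" where
  "gamma n s i = card {t \<in> U_set n s i. s i < t}"

end

(* The length of an affine permutation s equals its inversion number, the number of pairs (i, j)
   with 1 \<le> i \<le> n, i < j and s j < s i.  Composing s with the affine transposition of the positions
   congruent to k - 1 and k acts on \<partial>s as the simple reflection s_k and changes the inversion number by
   exactly one, upwards iff s (k - 1) < s k.  Without inversions s is increasing, hence \<partial>s = (1, ..., 1);
   with inversions it has a descent s k < s (k - 1) for some 0 \<le> k < n, which can be undone.

   For dominant s, an inversion (b, j) with b \<le> n forces j > n, and s j then lies in exactly one gap
   (s l, s (l + 1)) with l < b.  The positions j > n with s j in the l-th gap are matched with the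
   \<gamma>_l elements of U_l above s l, so summing over b = 1..n counts \<gamma>_l exactly n - l times. *)

theory Submission
  imports Defs
begin

lemma sum_periodic_window:
  fixes f :: "int \<Rightarrow> 'a::cancel_comm_monoid_add"
  assumes "\<And>x. f (x + int n) = f x"
  shows "(\<Sum>i<n. f (a + int i)) = (\<Sum>i<n. f (b + int i))"
proof -
  have step: "(\<Sum>i<n. f (c + 1 + int i)) = (\<Sum>i<n. f (c + int i))" for c
  proof -
    have "(\<Sum>i<Suc n. f (c + int i)) = f c + (\<Sum>i<n. f (c + 1 + int i))"
      by (subst sum.lessThan_Suc_shift) (simp add: algebra_simps)
    moreover have "(\<Sum>i<Suc n. f (c + int i)) = (\<Sum>i<n. f (c + int i)) + f (c + int n)"
      by simp
    ultimately show ?thesis using assms[of c] by (simp add: add.commute)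
  qed
  have "(\<Sum>i<n. f (c + int i)) = (\<Sum>i<n. f (b + int i))" for c
  proof (induction c rule: int_induct[where k = b])
    case (step2 c)
    then show ?case using step[of "c - 1"] by simp
  qed (use step in simp_all)
  then show ?thesis .
qed

lemma sum_int_window:
  "(\<Sum>i<n. f (a + int i)) = (\<Sum>x\<in>{a..<a + int n}. f x)"
proof -
  have "{a..<a + int n} = (\<lambda>i. a + int i) ` {..<n}"
  proof (rule set_eqI)
    fix x
    show "x \<in> {a..<a + int n} \<longleftrightarrow> x \<in> (\<lambda>i. a + int i) ` {..<n}"
      by (auto simp: image_iff intro!: bexI[where x = "nat (x - a)"])
  qed
  then show ?thesis by (simp add: sum.reindex inj_on_def)
qed

lemma card_eq_off_point:
  assumes "finite A" "finite B" "A - {x} = B - {x}"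
  shows "card A + of_bool (x \<in> B) = card B + of_bool (x \<in> A)"
proof -
  have split: "card C = card (C - {x}) + of_bool (x \<in> C)" if "finite C" for C :: "'a set"
    using that card_Suc_Diff1[of C x] by (cases "x \<in> C") auto
  show ?thesis using split[OF assms(1)] split[OF assms(2)] assms(3) by simp
qed

lemma sum_of_bool_single:
  assumes "finite A" "c \<in> A" "\<And>x. x \<in> A \<Longrightarrow> P x \<Longrightarrow> x = c"
  shows "(\<Sum>x\<in>A. of_bool (P x) :: nat) = of_bool (P c)"
proof -
  have "(\<Sum>x\<in>A. of_bool (P x) :: nat) = (\<Sum>x\<in>A. if x = c then of_bool (P c) else 0)"
    using assms(3) by (intro sum.cong) auto
  then show ?thesis using assms(1,2) by simp
qed

lemma strict_mono_int_succ:
  fixes f :: "int \<Rightarrow> 'a::order"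
  assumes "\<And>x. f x < f (x + 1)"
  shows "strict_mono f"
proof
  fix x y :: int
  assume "x < y"
  then show "f x < f y"
  proof (induction y rule: int_gr_induct)
    case (step y)
    then show ?case using assms[of y] by (meson less_trans)
  qed (rule assms)
qed

lemma int_discrete_crossing:
  fixes f :: "int \<Rightarrow> 'a::linorder"
  assumes "a \<le> b" "f a < v" "v \<le> f b"
  shows "\<exists>l. a \<le> l \<and> l < b \<and> f l < v \<and> v \<le> f (l + 1)"
  using assms
proof (induction b rule: int_ge_induct)
  case (step b)
  show ?case
  proof (cases "f b < v")
    case True
    then show ?thesis using step by (intro exI[of _ b]) auto
  next
    case False
    then obtain l where "a \<le> l" "l < b" "f l < v" "v \<le> f (l + 1)"
      using step by (auto simp: not_less)
    then show ?thesis by (intro exI[of _ l]) simp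
  qed
qed simp

lemma sum_triangle_exchange:
  fixes g :: "nat \<Rightarrow> nat"
  shows "(\<Sum>i<n. \<Sum>l\<in>{1..i}. g l) = (\<Sum>l\<in>{1..n - 1}. (n - l) * g l)"
proof (induction n)
  case (Suc n)
  have "(\<Sum>l\<in>{1..n}. (Suc n - l) * g l) = (\<Sum>l\<in>{1..n}. (n - l) * g l) + (\<Sum>l\<in>{1..n}. g l)"
    by (simp add: sum.distrib[symmetric] Suc_diff_le algebra_simps)
  moreover have "(\<Sum>l\<in>{1..n}. (n - l) * g l) = (\<Sum>l\<in>{1..n - 1}. (n - l) * g l)"
    by (cases n) (simp_all add: sum.atLeast1_atMost_eq)
  ultimately show ?case using Suc by simp
qed simp

lemma not_dvd_succ_if_dvd:
  assumes "2 \<le> n" "int n dvd a"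
  shows "\<not> int n dvd a + 1"
proof
  assume "int n dvd a + 1"
  then have "int n dvd 1" using assms(2) by (simp add: dvd_add_right_iff)
  then show False using assms(1) by simp
qed

lemma nat_eq_mod_iff_dvd:
  assumes "j < n"
  shows "j = m mod n \<longleftrightarrow> int n dvd int j - int m"
proof -
  have "j = m mod n \<longleftrightarrow> int j mod int n = int m mod int n"
    using assms by (metis mod_less of_nat_eq_iff of_nat_mod)
  also have "\<dots> \<longleftrightarrow> int n dvd int j - int m" by (rule mod_eq_dvd_iff)
  finally show ?thesis .
qed

section \<open>Affine-periodic functions on the integers\<close>

definition affine_periodic :: "nat \<Rightarrow> (int \<Rightarrow> int) \<Rightarrow> bool" where
  "affine_periodic n s \<longleftrightarrow> (\<forall>i. s (i + int n) = s i + int n)"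

definition diff_step :: "(int \<Rightarrow> int) \<Rightarrow> int \<Rightarrow> int" where
  "diff_step s x = s x - s (x - 1)"

lemma affine_perm_imp_periodic: "affine_perm n s \<Longrightarrow> affine_periodic n s"
  unfolding affine_perm_def affine_periodic_def by blast

lemma affine_periodic_shift:
  assumes "affine_periodic n s"
  shows "s (i + m * int n) = s i + m * int n"
proof (induction m rule: int_induct[where k = 0])
  case (step1 m)
  have "s (i + (m + 1) * int n) = s (i + m * int n + int n)" by (simp add: algebra_simps)
  also have "\<dots> = s (i + m * int n) + int n"
    using assms unfolding affine_periodic_def by blast
  finally show ?case using step1 by (simp add: algebra_simps)
next
  case (step2 m)
  have "s (i + m * int n) = s (i + (m - 1) * int n + int n)" by (simp add: algebra_simps)
  also have "\<dots> = s (i + (m - 1) * int n) + int n"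
    using assms unfolding affine_periodic_def by blast
  finally show ?case using step2 by (simp add: algebra_simps)
qed simp

lemma affine_periodic_mod_eq:
  assumes "affine_periodic n s" "x mod int n = y mod int n"
  shows "s x - x = s y - y"
proof -
  have "int n dvd x - y" using assms(2) by (simp add: mod_eq_dvd_iff)
  then obtain q where "x - y = int n * q" by (rule dvdE)
  then have "x = y + q * int n" by (simp add: algebra_simps)
  then show ?thesis using affine_periodic_shift[OF assms(1)] by simp
qed

lemma affine_periodic_decompose:
  assumes "affine_periodic n s" "n > 0"
  obtains r q where "1 \<le> r" "r \<le> int n" "j = r + q * int n" "s j = s r + q * int n"
proof
  show "j = ((j - 1) mod int n + 1) + (j - 1) div int n * int n"
    by (simp add: algebra_simps mod_div_mult_eq)
  show "s j = s ((j - 1) mod int n + 1) + (j - 1) div int n * int n"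
    by (subst \<open>j = _\<close>) (rule affine_periodic_shift[OF assms(1)])
  have "(j - 1) mod int n < int n" using assms(2) by simp
  then show "(j - 1) mod int n + 1 \<le> int n" by linarith
qed (use assms(2) in simp)

lemma affine_periodic_same_residue:
  assumes "affine_periodic n s" "inj s" "s j mod int n = s k mod int n"
  shows "\<exists>q. j = k + q * int n \<and> s j = s k + q * int n"
proof -
  obtain q where q: "s j - s k = int n * q"
    using assms(3) by (metis mod_eq_dvd_iff dvdE)
  then have "s (k + q * int n) = s j"
    using affine_periodic_shift[OF assms(1)] by (simp add: algebra_simps)
  then have "j = k + q * int n" using assms(2) by (simp add: inj_eq)
  with q show ?thesis by (auto simp: algebra_simps)
qed

lemma affine_periodic_displacement_bounded:
  assumes "affine_periodic n s" "n > 0"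
  obtains M where "\<And>x. \<bar>s x - x\<bar> \<le> M"
proof
  fix x
  have "s x - x = s (x mod int n) - x mod int n"
    by (rule affine_periodic_mod_eq[OF assms(1)]) simp
  moreover have "x mod int n \<in> {0..<int n}" using assms(2) by simp
  ultimately have "\<bar>s x - x\<bar> \<in> (\<lambda>y. \<bar>s y - y\<bar>) ` {0..<int n}"
    by (simp add: rev_image_eqI)
  then show "\<bar>s x - x\<bar> \<le> Max ((\<lambda>y. \<bar>s y - y\<bar>) ` {0..<int n})"
    by (simp add: Max_ge)
qed

lemma diff_step_mod_eq:
  assumes "affine_periodic n s" "x mod int n = y mod int n"
  shows "diff_step s x = diff_step s y"
proof -
  have "(x - 1) mod int n = (y - 1) mod int n" using assms(2) by (metis mod_diff_left_eq)
  then have "s (x - 1) - (x - 1) = s (y - 1) - (y - 1)"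
    by (rule affine_periodic_mod_eq[OF assms(1)])
  moreover have "s x - x = s y - y" by (rule affine_periodic_mod_eq[OF assms])
  ultimately show ?thesis unfolding diff_step_def by simp
qed

lemma strict_mono_iff_window:
  assumes "affine_periodic n s" "n > 0"
  shows "strict_mono s \<longleftrightarrow> (\<forall>k<n. s (int k - 1) < s (int k))"
proof
  assume "\<forall>k<n. s (int k - 1) < s (int k)"
  then have pos: "diff_step s (int k) > 0" if "k < n" for k
    using that unfolding diff_step_def by simp
  have "diff_step s x > 0" for x
  proof -
    define k where "k = nat (x mod int n)"
    have "x mod int n = int k" "k < n"
      using assms(2) unfolding k_def by (simp_all add: nat_less_iff)
    then show ?thesis using pos[of k] diff_step_mod_eq[OF assms(1), of x "int k"] by simp
  qed
  then have "s x < s (x + 1)" for x unfolding diff_step_def by (smt (verit) add_diff_cancel_right')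
  then show "strict_mono s" by (rule strict_mono_int_succ)
qed (simp add: strict_mono_less)

lemma strict_mono_bij_succ:
  fixes s :: "int \<Rightarrow> int"
  assumes "bij s" "strict_mono s"
  shows "s (x + 1) = s x + 1"
proof -
  obtain y where y: "s y = s x + 1" using assms(1) by (metis bij_pointE)
  then have "\<not> y \<le> x" using strict_mono_less_eq[OF assms(2), of y x] by simp
  then have "s (x + 1) \<le> s y" using strict_mono_less_eq[OF assms(2), of "x + 1" y] by simp
  moreover have "s x < s (x + 1)" using assms(2) by (simp add: strict_mono_less)
  ultimately show ?thesis using y by simp
qed

section \<open>The affine inversion number\<close>

definition inversions_at :: "(int \<Rightarrow> int) \<Rightarrow> int \<Rightarrow> int set" where
  "inversions_at s i = {j. i < j \<and> s j < s i}"

definition inv_number :: "nat \<Rightarrow> (int \<Rightarrow> int) \<Rightarrow> nat" where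
  "inv_number n s = (\<Sum>i<n. card (inversions_at s (int i + 1)))"

lemma finite_inversions_at:
  assumes "affine_periodic n s" "n > 0"
  shows "finite (inversions_at s i)"
proof -
  obtain M where M: "\<And>x. \<bar>s x - x\<bar> \<le> M"
    using affine_periodic_displacement_bounded[OF assms] by blast
  have "inversions_at s i \<subseteq> {i..i + 2 * M}"
  proof
    fix j assume "j \<in> inversions_at s i"
    then have "i < j" "s j < s i" unfolding inversions_at_def by auto
    with M[of i] M[of j] show "j \<in> {i..i + 2 * M}" by auto
  qed
  then show ?thesis by (rule finite_subset) simp
qed

lemma card_inversions_at_shift:
  assumes "affine_periodic n s"
  shows "card (inversions_at s (i + int n)) = card (inversions_at s i)"
proof -
  have "inversions_at s (i + int n) = (\<lambda>j. j + int n) ` inversions_at s i"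
  proof (rule set_eqI)
    fix j
    have "s j = s (j - int n) + int n"
      using assms unfolding affine_periodic_def by (metis diff_add_cancel)
    then show "j \<in> inversions_at s (i + int n) \<longleftrightarrow> j \<in> (\<lambda>j. j + int n) ` inversions_at s i"
      using assms unfolding inversions_at_def affine_periodic_def
      by (auto intro!: image_eqI[where x = "j - int n"])
  qed
  then show ?thesis by (simp add: card_image)
qed

lemma inv_number_window:
  assumes "affine_periodic n s"
  shows "inv_number n s = (\<Sum>x\<in>{a..<a + int n}. card (inversions_at s x))"
  unfolding inv_number_def sum_int_window[symmetric]
  using sum_periodic_window[of "\<lambda>x. card (inversions_at s x)" n 1 a]
    card_inversions_at_shift[OF assms] by (simp add: add.commute)

lemma inv_number_eq_0_iff_strict_mono:
  assumes "affine_periodic n s" "n > 0" "inj s"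
  shows "inv_number n s = 0 \<longleftrightarrow> strict_mono s"
proof
  assume inv0: "inv_number n s = 0"
  have "s x < s (x + 1)" for x
  proof -
    have "(\<Sum>y\<in>{x..<x + int n}. card (inversions_at s y)) = 0"
      using inv0 inv_number_window[OF assms(1)] by simp
    then have "card (inversions_at s x) = 0" using assms(2) by simp
    then have "inversions_at s x = {}" using finite_inversions_at[OF assms(1,2)] by simp
    then have "\<not> s (x + 1) < s x" unfolding inversions_at_def by auto
    moreover have "s (x + 1) \<noteq> s x" by (simp add: inj_eq[OF assms(3)])
    ultimately show ?thesis by simp
  qed
  then show "strict_mono s" by (rule strict_mono_int_succ)
next
  assume "strict_mono s"
  then have "inversions_at s x = {}" for x
    unfolding inversions_at_def by (simp add: strict_mono_less)
  then show "inv_number n s = 0" unfolding inv_number_def by simp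
qed

section \<open>Affine transpositions\<close>

text \<open>\<open>s \<circ> affine_transp n k\<close> exchanges the values of \<open>s\<close> at the positions congruent to
  \<open>k - 1\<close> and \<open>k\<close> modulo \<open>n\<close>.\<close>

definition affine_transp :: "nat \<Rightarrow> nat \<Rightarrow> int \<Rightarrow> int" where
  "affine_transp n k x =
     (if int n dvd x - int k + 1 then x + 1 else if int n dvd x - int k then x - 1 else x)"

context
  fixes n k :: nat
  assumes n2: "2 \<le> n"
begin

lemma affine_transp_involution: "affine_transp n k (affine_transp n k x) = x"
  using not_dvd_succ_if_dvd[OF n2, of "x - int k"] not_dvd_succ_if_dvd[OF n2, of "x - int k - 1"]
    not_dvd_succ_if_dvd[OF n2, of "x - int k + 1"]
  unfolding affine_transp_def by (auto simp: algebra_simps)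

lemma affine_transp_shift: "affine_transp n k (x + int n) = affine_transp n k x + int n"
proof -
  have "int n dvd x + int n - int k + c \<longleftrightarrow> int n dvd x - int k + c" for c
  proof -
    have "x + int n - int k + c = (x - int k + c) + int n" by simp
    then show ?thesis by (simp only: dvd_add_triv_right_iff)
  qed
  from this[of 1] this[of 0] show ?thesis unfolding affine_transp_def by simp
qed

lemma bij_affine_transp: "bij (affine_transp n k)"
  by (rule involuntory_imp_bij) (rule affine_transp_involution)

lemma affine_transp_less_iff:
  assumes "j \<noteq> x"
  shows "x < affine_transp n k j \<longleftrightarrow> affine_transp n k x < j"
proof -
  have no_adj: "\<not> (int n dvd a + 1 \<and> int n dvd a)" for a
    using not_dvd_succ_if_dvd[OF n2] by blast
  show ?thesis
    using assms no_adj[of "x - int k"] no_adj[of "j - int k"] no_adj[of "x - int k - 1"]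
      no_adj[of "j - int k - 1"] no_adj[of "x - int k + 1"]
    unfolding affine_transp_def by (smt (verit))
qed

lemma affine_transp_on_window:
  assumes "int k - 1 \<le> x" "x < int k - 1 + int n"
  shows "affine_transp n k x = (if x = int k - 1 then int k else if x = int k then int k - 1 else x)"
proof -
  have dvd_iff: "int n dvd a \<longleftrightarrow> a = 0" if "0 \<le> a" "a < int n" for a
    using that zdvd_not_zless[of a "int n"] by fastforce
  have "int n dvd x - int k + 1 \<longleftrightarrow> x = int k - 1" using assms by (subst dvd_iff) auto
  moreover have "x \<noteq> int k - 1 \<Longrightarrow> int n dvd x - int k \<longleftrightarrow> x = int k"
    using assms by (subst dvd_iff) auto
  ultimately show ?thesis unfolding affine_transp_def by auto
qed

lemma affine_transp_window_image:
  "affine_transp n k ` {int k - 1..<int k - 1 + int n} = {int k - 1..<int k - 1 + int n}"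
  (is "affine_transp n k ` ?W = ?W")
proof -
  have into: "affine_transp n k ` ?W \<subseteq> ?W"
    using n2 affine_transp_on_window by auto
  then have "?W \<subseteq> affine_transp n k ` ?W"
    by (metis affine_transp_involution image_eqI subsetD subsetI)
  with into show ?thesis by blast
qed

lemma diff_step_comp_affine_transp:
  assumes "affine_periodic n s"
  shows "diff_step (s \<circ> affine_transp n k) x =
    (if int n dvd x - int k then - diff_step s x
     else diff_step s x + (if int n dvd x - int k + 1 then diff_step s (int k) else 0)
                        + (if int n dvd x - int k - 1 then diff_step s (int k) else 0))"
proof -
  have same_step: "diff_step s y = diff_step s (int k)" if "int n dvd y - int k" for y
    using that by (intro diff_step_mod_eq[OF assms]) (simp add: mod_eq_dvd_iff)
  have shifts: "x - 1 - int k + 1 = x - int k" "x - 1 - int k = x - int k - 1"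
    "x + 1 - int k = x - int k + 1" by simp_all
  show ?thesis
  proof (cases "int n dvd x - int k")
    case True
    then have "\<not> int n dvd x - int k + 1" by (rule not_dvd_succ_if_dvd[OF n2])
    with True have "affine_transp n k x = x - 1" "affine_transp n k (x - 1) = x"
      unfolding affine_transp_def shifts by simp_all
    then show ?thesis using True unfolding diff_step_def by simp
  next
    case False
    have "affine_transp n k x = (if int n dvd x - int k + 1 then x + 1 else x)"
      using False unfolding affine_transp_def by simp
    then have "s (affine_transp n k x) = s x + (if int n dvd x - int k + 1 then diff_step s (int k) else 0)"
      using same_step[of "x + 1"] unfolding diff_step_def shifts by auto
    moreover have "affine_transp n k (x - 1) = (if int n dvd x - int k - 1 then x - 1 - 1 else x - 1)"
      using False unfolding affine_transp_def shifts by simp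
    then have "s (affine_transp n k (x - 1)) = s (x - 1) - (if int n dvd x - int k - 1 then diff_step s (int k) else 0)"
      using same_step[of "x - 1"] unfolding diff_step_def shifts by auto
    ultimately show ?thesis using False unfolding diff_step_def by simp
  qed
qed

end

lemma affine_periodic_comp_affine_transp:
  "2 \<le> n \<Longrightarrow> affine_periodic n s \<Longrightarrow> affine_periodic n (s \<circ> affine_transp n k)"
  unfolding affine_periodic_def by (simp add: affine_transp_shift)

lemma boundary_comp_affine_transp:
  assumes "2 \<le> n" "k < n" "affine_periodic n s"
  shows "boundary n (s \<circ> affine_transp n k) = simple_refl n k (boundary n s)"
proof
  fix j
  have bdry: "boundary n s i = (if i < n then of_int (diff_step s (int i)) else 0)" for s i
    unfolding boundary_def diff_step_def by simp
  show "boundary n (s \<circ> affine_transp n k) j = simple_refl n k (boundary n s) j"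
  proof (cases "j < n")
    case True
    have k_iff: "j = k \<longleftrightarrow> int n dvd int j - int k"
      using nat_eq_mod_iff_dvd[OF True, of k] assms(2) by simp
    have succ_iff: "j = (k + 1) mod n \<longleftrightarrow> int n dvd int j - int k - 1"
      using nat_eq_mod_iff_dvd[OF True, of "k + 1"] by (simp add: algebra_simps)
    have pred_iff: "j = (k + n - 1) mod n \<longleftrightarrow> int n dvd int j - int k + 1"
    proof -
      have "int j - int (k + n - 1) = (int j - int k + 1) + (- 1) * int n" using assms(1) by simp
      then show ?thesis
        using nat_eq_mod_iff_dvd[OF True, of "k + n - 1"] by (simp only: dvd_add_times_triv_right_iff)
    qed
    show ?thesis
      using True assms(2) unfolding bdry simple_refl_def diff_step_comp_affine_transp[OF assms(1,3)]
        k_iff[symmetric] succ_iff[symmetric] pred_iff[symmetric]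
      by auto
  next
    case False
    then show ?thesis using assms(2) unfolding bdry simple_refl_def by auto
  qed
qed

lemma card_inversions_at_comp_affine_transp:
  fixes k :: nat
  assumes "2 \<le> n" "affine_periodic n s"
  defines "\<tau> \<equiv> affine_transp n k"
  shows "card (inversions_at (s \<circ> \<tau>) x) + of_bool (\<tau> x < x \<and> s x < s (\<tau> x))
       = card (inversions_at s (\<tau> x)) + of_bool (x < \<tau> x \<and> s x < s (\<tau> x))"
proof -
  \<comment> \<open>Reindexed by \<open>\<tau>\<close>, the inversions of \<open>s \<circ> \<tau>\<close> at \<open>x\<close> agree with those of \<open>s\<close> at
    \<open>\<tau> x\<close> except possibly at \<open>x\<close> itself.\<close>
  define A where "A = {j. x < \<tau> j \<and> s j < s (\<tau> x)}"
  have "inversions_at (s \<circ> \<tau>) x = \<tau> -` A"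
    unfolding inversions_at_def A_def \<tau>_def by (simp add: affine_transp_involution[OF assms(1)])
  moreover have "bij \<tau>" unfolding \<tau>_def by (rule bij_affine_transp[OF assms(1)])
  ultimately have card_A: "card (inversions_at (s \<circ> \<tau>) x) = card A"
    by (simp add: card_vimage_inj bij_is_inj bij_is_surj)
  have off_x: "A - {x} = inversions_at s (\<tau> x) - {x}"
    unfolding A_def inversions_at_def \<tau>_def by (auto simp: affine_transp_less_iff[OF assms(1)])
  have fin: "finite (inversions_at s (\<tau> x))"
    using finite_inversions_at[OF assms(2)] assms(1) by simp
  then have "finite (A - {x})" unfolding off_x by simp
  then have "finite A" by simp
  from card_eq_off_point[OF this fin off_x] show ?thesis
    unfolding card_A by (simp add: A_def inversions_at_def)
qed

lemma inv_number_comp_affine_transp: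
  assumes "2 \<le> n" "affine_periodic n s"
  shows "inv_number n (s \<circ> affine_transp n k) + of_bool (s (int k) < s (int k - 1))
       = inv_number n s + of_bool (s (int k - 1) < s (int k))"
proof -
  define \<tau> where "\<tau> = affine_transp n k"
  \<comment> \<open>\<open>\<tau>\<close> maps this window onto itself, moving only \<open>k - 1\<close> and \<open>k\<close>.\<close>
  define W where "W = {int k - 1..<int k - 1 + int n}"
  have on_W: "\<tau> x = (if x = int k - 1 then int k else if x = int k then int k - 1 else x)"
    if "x \<in> W" for x
    using that affine_transp_on_window[OF assms(1)] unfolding W_def \<tau>_def by auto
  have k_in_W: "int k - 1 \<in> W" "int k \<in> W" and fin_W: "finite W"
    using assms(1) unfolding W_def by auto
  have "inj_on \<tau> W"
    using bij_is_inj[OF bij_affine_transp[OF assms(1)]] unfolding \<tau>_def by (rule inj_on_subset) simp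
  then have reindex: "(\<Sum>x\<in>W. card (inversions_at s (\<tau> x))) = (\<Sum>x\<in>W. card (inversions_at s x))"
    using sum.reindex[of \<tau> W "\<lambda>x. card (inversions_at s x)"] affine_transp_window_image[OF assms(1)]
    unfolding W_def \<tau>_def by simp
  have "(\<Sum>x\<in>W. of_bool (\<tau> x < x \<and> s x < s (\<tau> x)) :: nat)
      = of_bool (\<tau> (int k) < int k \<and> s (int k) < s (\<tau> (int k)))"
    by (rule sum_of_bool_single[OF fin_W k_in_W(2)]) (simp add: on_W split: if_splits)
  then have down: "(\<Sum>x\<in>W. of_bool (\<tau> x < x \<and> s x < s (\<tau> x)) :: nat)
      = of_bool (s (int k) < s (int k - 1))"
    using on_W[OF k_in_W(2)] by simp
  have "(\<Sum>x\<in>W. of_bool (x < \<tau> x \<and> s x < s (\<tau> x)) :: nat)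
      = of_bool (int k - 1 < \<tau> (int k - 1) \<and> s (int k - 1) < s (\<tau> (int k - 1)))"
    by (rule sum_of_bool_single[OF fin_W k_in_W(1)]) (simp add: on_W split: if_splits)
  then have up: "(\<Sum>x\<in>W. of_bool (x < \<tau> x \<and> s x < s (\<tau> x)) :: nat)
      = of_bool (s (int k - 1) < s (int k))"
    using on_W[OF k_in_W(1)] by simp
  have "(\<Sum>x\<in>W. card (inversions_at (s \<circ> \<tau>) x)) + (\<Sum>x\<in>W. of_bool (\<tau> x < x \<and> s x < s (\<tau> x)))
      = (\<Sum>x\<in>W. card (inversions_at s (\<tau> x))) + (\<Sum>x\<in>W. of_bool (x < \<tau> x \<and> s x < s (\<tau> x)))"
    using card_inversions_at_comp_affine_transp[OF assms] unfolding \<tau>_def sum.distrib[symmetric] by simp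
  then show ?thesis
    using inv_number_window[OF assms(2)] inv_number_window[OF affine_periodic_comp_affine_transp[OF assms]]
      reindex down up unfolding W_def \<tau>_def by simp
qed

section \<open>Length equals inversion number\<close>

lemma boundary_eq_ones_iff:
  "boundary n s = ones_vec n \<longleftrightarrow> (\<forall>k<n. diff_step s (int k) = 1)"
proof -
  have "boundary n s j = ones_vec n j \<longleftrightarrow> (j < n \<longrightarrow> diff_step s (int j) = 1)" for j
    unfolding boundary_def ones_vec_def diff_step_def by (simp del: of_int_diff)
  then show ?thesis by (simp add: fun_eq_iff)
qed

lemma word_act_Cons: "word_act n (w # ws) x = simple_refl n w (word_act n ws x)"
  unfolding word_act_def by simp

lemma simple_refl_involution: "simple_refl n w (simple_refl n w x) = x"
  unfolding simple_refl_def by auto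

lemma inv_number_le_word_length:
  assumes "2 \<le> n" "affine_periodic n s" "bij s" "set ws \<subseteq> {..<n}"
    "word_act n ws (ones_vec n) = boundary n s"
  shows "inv_number n s \<le> length ws"
  using assms(2-)
proof (induction ws arbitrary: s)
  case Nil
  then have "\<forall>k<n. diff_step s (int k) = 1"
    by (simp add: word_act_def boundary_eq_ones_iff[symmetric])
  then have "s (int k - 1) < s (int k)" if "k < n" for k
    using that unfolding diff_step_def by force
  then have "strict_mono s"
    using strict_mono_iff_window[OF Nil(1)] assms(1) by simp
  then show ?case
    using inv_number_eq_0_iff_strict_mono[OF Nil(1)] Nil(2) assms(1) by (simp add: bij_is_inj)
next
  case (Cons w ws)
  let ?t = "s \<circ> affine_transp n w"
  have "word_act n ws (ones_vec n) = simple_refl n w (word_act n (w # ws) (ones_vec n))"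
    by (simp add: word_act_Cons simple_refl_involution)
  also have "\<dots> = simple_refl n w (boundary n s)" by (simp only: Cons.prems(4))
  also have "\<dots> = boundary n ?t"
    using boundary_comp_affine_transp[OF assms(1) _ Cons.prems(1)] Cons.prems(3) by simp
  finally have word_t: "word_act n ws (ones_vec n) = boundary n ?t" .
  have per_t: "affine_periodic n ?t"
    by (rule affine_periodic_comp_affine_transp[OF assms(1) Cons.prems(1)])
  have bij_t: "bij ?t" by (rule bij_comp[OF bij_affine_transp[OF assms(1)] Cons.prems(2)])
  have "inv_number n ?t \<le> length ws"
    by (rule Cons.IH[OF per_t bij_t _ word_t]) (use Cons.prems(3) in simp)
  moreover have "inv_number n ?t + of_bool (s (int w) < s (int w - 1))
      = inv_number n s + of_bool (s (int w - 1) < s (int w))"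
    by (rule inv_number_comp_affine_transp[OF assms(1) Cons.prems(1)])
  ultimately show ?case by (simp add: of_bool_def split: if_splits)
qed

lemma word_of_inv_number:
  assumes "2 \<le> n" "affine_periodic n s" "bij s"
  shows "\<exists>ws. length ws = inv_number n s \<and> set ws \<subseteq> {..<n}
    \<and> word_act n ws (ones_vec n) = boundary n s"
  using assms(2,3)
proof (induction "inv_number n s" arbitrary: s)
  case 0
  then have "strict_mono s"
    using inv_number_eq_0_iff_strict_mono[OF 0(2) _ bij_is_inj[OF 0(3)]] assms(1) by simp
  then have "diff_step s x = 1" for x
    using strict_mono_bij_succ[OF 0(3), of "x - 1"] unfolding diff_step_def by simp
  then have "boundary n s = ones_vec n" by (simp add: boundary_eq_ones_iff)
  then show ?case
    using 0(1) by (intro exI[of _ "[]"]) (simp add: word_act_def)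
next
  case (Suc m)
  have "\<not> strict_mono s"
    using inv_number_eq_0_iff_strict_mono[OF Suc(3) _ bij_is_inj[OF Suc(4)]] Suc(2) assms(1) by simp
  then obtain k where k: "k < n" "\<not> s (int k - 1) < s (int k)"
    using strict_mono_iff_window[OF Suc(3)] assms(1) by auto
  moreover have "s (int k) \<noteq> s (int k - 1)" by (simp add: inj_eq[OF bij_is_inj[OF Suc(4)]])
  ultimately have descent: "s (int k) < s (int k - 1)" by simp
  let ?t = "s \<circ> affine_transp n k"
  have "inv_number n ?t = m"
    using inv_number_comp_affine_transp[OF assms(1) Suc(3), of k] descent Suc(2) by simp
  then obtain ws where ws: "length ws = m" "set ws \<subseteq> {..<n}" "word_act n ws (ones_vec n) = boundary n ?t"
    using Suc(1) affine_periodic_comp_affine_transp[OF assms(1) Suc(3)]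
      bij_comp[OF bij_affine_transp[OF assms(1)] Suc(4)] by blast
  have "word_act n (k # ws) (ones_vec n) = boundary n s"
    using ws(3) boundary_comp_affine_transp[OF assms(1) k(1) Suc(3)]
    by (simp add: word_act_Cons simple_refl_involution)
  then show ?case using ws Suc(2) k(1) by (intro exI[of _ "k # ws"]) auto
qed

theorem aff_length_eq_inv_number:
  assumes "2 \<le> n" "affine_perm n s"
  shows "aff_length n s = inv_number n s"
proof -
  have per: "affine_periodic n s" and "bij s"
    using assms(2) by (simp_all add: affine_perm_imp_periodic affine_perm_def)
  then show ?thesis unfolding aff_length_def
    using word_of_inv_number[OF assms(1) per] inv_number_le_word_length[OF assms(1) per]
    by (intro Least_equality) auto
qed

section \<open>The dominant chamber\<close>

definition window_gap :: "nat \<Rightarrow> (int \<Rightarrow> int) \<Rightarrow> int \<Rightarrow> int set" where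
  "window_gap n s i = {j. int n < j \<and> s i < s j \<and> s j < s (i + 1)}"

context
  fixes n :: nat and s :: "int \<Rightarrow> int"
  assumes n2: "2 \<le> n" and per: "affine_periodic n s" and bij: "bij s" and dom: "dominant n s"
begin

lemma dominant_le: "1 \<le> i \<Longrightarrow> i \<le> j \<Longrightarrow> j \<le> int n \<Longrightarrow> s i \<le> s j"
  using dom unfolding dominant_def by (cases "i = j") (auto simp: less_imp_le)

lemma dominant_less: "1 \<le> i \<Longrightarrow> i < j \<Longrightarrow> j \<le> int n \<Longrightarrow> s i < s j"
  using dom unfolding dominant_def by auto

lemma dominant_decompose_beyond_window:
  assumes "int n < j"
  obtains r q where "1 \<le> r" "r \<le> int n" "1 \<le> q" "j = r + q * int n" "s j = s r + q * int n"
proof -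
  obtain r q where rq: "1 \<le> r" "r \<le> int n" "j = r + q * int n" "s j = s r + q * int n"
    using affine_periodic_decompose[OF per] n2 by auto
  have "1 \<le> q"
  proof (rule ccontr)
    assume "\<not> 1 \<le> q"
    then have "q * int n \<le> 0" by (simp add: mult_nonpos_nonneg)
    then show False using rq assms by simp
  qed
  with rq that show ?thesis by blast
qed

lemma dominant_first_less_beyond_window: "int n < j \<Longrightarrow> s 1 < s j"
proof -
  assume "int n < j"
  then obtain r q where "1 \<le> r" "r \<le> int n" "1 \<le> q" "s j = s r + q * int n"
    by (rule dominant_decompose_beyond_window)
  moreover have "s 1 \<le> s r" using \<open>1 \<le> r\<close> \<open>r \<le> int n\<close> by (intro dominant_le) auto
  ultimately show "s 1 < s j" using n2 by (smt (verit) mult_le_cancel_right1 of_nat_0_le_iff)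
qed

lemma inversions_at_dominant:
  assumes "1 \<le> b" "b \<le> n"
  shows "inversions_at s (int b) = (\<Union>l\<in>{1..<b}. window_gap n s (int l))"
proof (intro equalityI subsetI)
  fix j assume "j \<in> inversions_at s (int b)"
  then have jb: "int b < j" "s j < s (int b)" unfolding inversions_at_def by auto
  have jn: "int n < j"
    using jb dominant_less[of "int b" j] assms by (cases "int n < j") auto
  have "1 \<le> int b" using assms by simp
  with dominant_first_less_beyond_window[OF jn] jb(2)
  obtain l where l: "1 \<le> l" "l < int b" "s l < s j" "s j \<le> s (l + 1)"
    using int_discrete_crossing[of 1 "int b" s "s j"] by auto
  moreover have "s j \<noteq> s (l + 1)" using jn l(2) assms(2) by (simp add: inj_eq[OF bij_is_inj[OF bij]])
  ultimately have "j \<in> window_gap n s (int (nat l))" using jn unfolding window_gap_def by simp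
  moreover have "nat l \<in> {1..<b}" using l by auto
  ultimately show "j \<in> (\<Union>l\<in>{1..<b}. window_gap n s (int l))" by blast
next
  fix j assume "j \<in> (\<Union>l\<in>{1..<b}. window_gap n s (int l))"
  then obtain l where l: "l \<in> {1..<b}" "j \<in> window_gap n s (int l)" by blast
  then have "s (int l + 1) \<le> s (int b)" using assms by (intro dominant_le) auto
  then show "j \<in> inversions_at s (int b)"
    using l assms unfolding window_gap_def inversions_at_def by auto
qed

lemma finite_window_gap: "1 \<le> i \<Longrightarrow> i + 1 \<le> int n \<Longrightarrow> finite (window_gap n s i)"
proof -
  assume "1 \<le> i" "i + 1 \<le> int n"
  then have "window_gap n s i \<subseteq> inversions_at s (i + 1)"
    unfolding window_gap_def inversions_at_def by auto
  then show ?thesis using finite_inversions_at[OF per] n2 by (meson finite_subset zero_less_numeral less_le_trans)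
qed

lemma card_inversions_at_dominant:
  assumes "1 \<le> b" "b \<le> n"
  shows "card (inversions_at s (int b)) = (\<Sum>l\<in>{1..<b}. card (window_gap n s (int l)))"
proof -
  have disjoint: "window_gap n s (int l) \<inter> window_gap n s (int l') = {}"
    if "l \<in> {1..<b}" "l' \<in> {1..<b}" "l < l'" for l l'
  proof -
    have "s (int l + 1) \<le> s (int l')" using that assms by (intro dominant_le) auto
    then show ?thesis unfolding window_gap_def by auto
  qed
  show ?thesis unfolding inversions_at_dominant[OF assms]
  proof (rule card_UN_disjoint)
    show "\<forall>l\<in>{1..<b}. finite (window_gap n s (int l))"
      using assms by (auto intro: finite_window_gap)
    show "\<forall>l\<in>{1..<b}. \<forall>l'\<in>{1..<b}. l \<noteq> l' \<longrightarrow>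
        window_gap n s (int l) \<inter> window_gap n s (int l') = {}"
      using disjoint by (metis Int_commute linorder_neqE_nat)
  qed simp
qed

lemma U_set_above_subset_window_gap:
  assumes "1 \<le> i" "i + 1 \<le> int n"
  shows "{t \<in> U_set n s i. s i < t} \<subseteq> s ` window_gap n s i"
proof
  fix t assume "t \<in> {t \<in> U_set n s i. s i < t}"
  then have t_lt: "s i < t" "t < s (i + 1)"
    and t_res: "\<And>k. i + 1 \<le> k \<Longrightarrow> k \<le> int n \<Longrightarrow> t mod int n \<noteq> s k mod int n"
    unfolding U_set_def by auto
  obtain j where tj: "t = s j" using bij by (metis bij_pointE)
  obtain r q where rq: "1 \<le> r" "r \<le> int n" "j = r + q * int n" "s j = s r + q * int n"
    using affine_periodic_decompose[OF per] n2 by auto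
  have "r \<le> i" using t_res[of r] rq tj by (cases "r \<le> i") auto
  then have "s r \<le> s i" using rq(1) assms by (intro dominant_le) auto
  then have "0 < q" using t_lt tj rq n2 by (smt (verit) mult_nonpos_nonneg of_nat_0_le_iff)
  then have "int n < j" using rq by (smt (verit) mult_le_cancel_right1 of_nat_0_le_iff)
  then show "t \<in> s ` window_gap n s i"
    using t_lt tj unfolding window_gap_def by auto
qed

lemma window_gap_subset_U_set_above:
  assumes "1 \<le> i" "i + 1 \<le> int n"
  shows "s ` window_gap n s i \<subseteq> {t \<in> U_set n s i. s i < t}"
proof
  fix t assume "t \<in> s ` window_gap n s i"
  then obtain j where j: "t = s j" "int n < j" "s i < s j" "s j < s (i + 1)"
    unfolding window_gap_def by blast
  have "t mod int n \<noteq> s k mod int n" if "i + 1 \<le> k" "k \<le> int n" for k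
  proof
    assume "t mod int n = s k mod int n"
    then obtain q where "j = k + q * int n" "s j = s k + q * int n"
      using affine_periodic_same_residue[OF per bij_is_inj[OF bij]] j(1) by blast
    moreover have "s (i + 1) \<le> s k" using that assms by (intro dominant_le) auto
    ultimately show False using j that n2 by (smt (verit) mult_le_cancel_right1 of_nat_0_le_iff)
  qed
  then show "t \<in> {t \<in> U_set n s i. s i < t}" using j unfolding U_set_def by auto
qed

lemma gamma_eq_card_window_gap:
  assumes "1 \<le> i" "i + 1 \<le> int n"
  shows "gamma n s i = card (window_gap n s i)"
proof -
  have "{t \<in> U_set n s i. s i < t} = s ` window_gap n s i"
    using U_set_above_subset_window_gap[OF assms] window_gap_subset_U_set_above[OF assms] by blast
  then show ?thesis unfolding gamma_def by (simp add: card_image inj_on_subset[OF bij_is_inj[OF bij]])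
qed

lemma inv_number_dominant: "inv_number n s = (\<Sum>i=1..n - 1. (n - i) * gamma n s (int i))"
proof -
  have "inv_number n s = (\<Sum>i<n. \<Sum>l\<in>{1..i}. card (window_gap n s (int l)))"
    unfolding inv_number_def
  proof (rule sum.cong)
    fix i assume "i \<in> {..<n}"
    then have "card (inversions_at s (int (Suc i))) = (\<Sum>l\<in>{1..<Suc i}. card (window_gap n s (int l)))"
      by (intro card_inversions_at_dominant) auto
    then show "card (inversions_at s (int i + 1)) = (\<Sum>l\<in>{1..i}. card (window_gap n s (int l)))"
      by (simp add: atLeastLessThanSuc_atLeastAtMost add.commute)
  qed simp
  also have "\<dots> = (\<Sum>l\<in>{1..n - 1}. (n - l) * card (window_gap n s (int l)))"
    by (rule sum_triangle_exchange)
  also have "\<dots> = (\<Sum>i=1..n - 1. (n - i) * gamma n s (int i))"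
    by (rule sum.cong) (use gamma_eq_card_window_gap n2 in auto)
  finally show ?thesis .
qed

end

theorem proposition5p3:
  fixes n :: nat and s :: "int \<Rightarrow> int"
  assumes "n \<ge> 2" and "affine_perm n s" and "dominant n s"
  shows "aff_length n s = (\<Sum>i=1..n-1. (n - i) * gamma n s (int i))"
proof -
  have "affine_periodic n s" "bij s"
    using assms(2) by (simp_all add: affine_perm_imp_periodic affine_perm_def)
  with assms show ?thesis
    by (simp add: aff_length_eq_inv_number inv_number_dominant)
qed

end
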